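(* Let $\mathcal{G}=(V,\mathit{Act},\mathcal{R})$ be a normed BPA system. For all $\alpha,\beta,\gamma\in V^*$: $\alpha\gamma\sim\beta\gamma$ if and only if $\alpha\sim_{R_\gamma}\beta$.
   Context: A BPA system $\mathcal{G}=(V,\mathit{Act},\mathcal{R})$: finite variables $V$, finite actions $\mathit{Act}$ (possibly containing the silent action $\tau$), rules $A\xrightarrow{a}\alpha$ ($A\in V,\alpha\in V^*$). LTS $\mathcal{L}_\mathcal{G}$: states $V^*$, transitions $A\beta\xrightarrow{a}\alpha\beta$ for rules $A\xrightarrow{a}\alpha$, $\beta\in V^*$. $\mathcal{G}$ is normed if every variable can reach $\varepsilon$ by a sequence of transitions. Branching bisimilarity $\sim$ on an LTS: the largest relation $\mathcal{B}$ such that for $(s,t)\in\mathcal{B}$ each move $s\xrightarrow{a}s'$ is matched either by $a=\tau$ and $(s',t)\in\mathcal{B}$, or by a path $t=t_0\xrightarrow{\tau}\cdots\xrightarrow{\tau}t_k\xrightarrow{a}t'$ with $(s',t')\in\mathcal{B}$, $(s,t_i)\in\mathcal{B}$ for $i\in[1,k]$; and symmetrically. $\sim$ without subscript refers to $\mathcal{L}_\mathcal{G}$. For $\gamma\in V^*$, $R_\gamma=\{X\in V\mid X\gamma\sim\gamma\}$. For $R\subseteq V$, the LTS $\mathcal{L}_{\mathcal{G},R}$ is obtained from $\mathcal{L}_\mathcal{G}$ by removing all outgoing transitions of every state $\alpha\in R^*$; $\alpha\sim_R\beta$ means $\alpha$ and $\beta$ are branching bisimilar in $\mathcal{L}_{\mathcal{G},R}$.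 *)

theory Defs
  imports Main
begin

text \<open>Actions are of type 'a option; the silent action tau is None.
  A BPA system is given by a variable set V, an action set Act and a rule set Rules,
  a rule A -a-> alpha being a triple (A, a, alpha).\<close>

definition bpa :: "'v set \<Rightarrow> 'a option set \<Rightarrow> ('v \<times> 'a option \<times> 'v list) set \<Rightarrow> bool" where
  "bpa V Act Rules \<longleftrightarrow> finite V \<and> finite Act \<and> finite Rules \<and>
     (\<forall>(A, a, \<alpha>) \<in> Rules. A \<in> V \<and> a \<in> Act \<and> \<alpha> \<in> lists V)"

definition bpa_step :: "'v set \<Rightarrow> ('v \<times> 'a option \<times> 'v list) set \<Rightarrow> 'v list \<Rightarrow> 'a option \<Rightarrow> 'v list \<Rightarrow> bool" where
  "bpa_step V Rules s a t \<longleftrightarrow>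
     (\<exists>A \<alpha> \<beta>. (A, a, \<alpha>) \<in> Rules \<and> \<beta> \<in> lists V \<and> s = A # \<beta> \<and> t = \<alpha> @ \<beta>)"

definition bpa_step_R :: "'v set \<Rightarrow> ('v \<times> 'a option \<times> 'v list) set \<Rightarrow> 'v set \<Rightarrow> 'v list \<Rightarrow> 'a option \<Rightarrow> 'v list \<Rightarrow> bool" where
  "bpa_step_R V Rules R s a t \<longleftrightarrow> bpa_step V Rules s a t \<and> s \<notin> lists R"

definition normed :: "'v set \<Rightarrow> ('v \<times> 'a option \<times> 'v list) set \<Rightarrow> bool" where
  "normed V Rules \<longleftrightarrow>
     (\<forall>X \<in> V. (\<lambda>s t. \<exists>a. bpa_step V Rules s a t)\<^sup>*\<^sup>* [X] [])"

definition bb_transfer :: "('s \<Rightarrow> 'a option \<Rightarrow> 's \<Rightarrow> bool) \<Rightarrow> ('s \<times> 's) set \<Rightarrow> bool" where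
  "bb_transfer T B \<longleftrightarrow>
     (\<forall>s t. (s, t) \<in> B \<longrightarrow> (\<forall>a s'. T s a s' \<longrightarrow>
        (a = None \<and> (s', t) \<in> B) \<or>
        (\<exists>k p t'. p 0 = t \<and> (\<forall>i<k. T (p i) None (p (Suc i))) \<and> T (p k) a t' \<and>
                  (s', t') \<in> B \<and> (\<forall>i\<in>{1..k}. (s, p i) \<in> B))))"

definition branching_bisimulation :: "'s set \<Rightarrow> ('s \<Rightarrow> 'a option \<Rightarrow> 's \<Rightarrow> bool) \<Rightarrow> ('s \<times> 's) set \<Rightarrow> bool" where
  "branching_bisimulation S T B \<longleftrightarrow> B \<subseteq> S \<times> S \<and> bb_transfer T B \<and> bb_transfer T (B\<inverse>)"

definition branching_bisimilar :: "'s set \<Rightarrow> ('s \<Rightarrow> 'a option \<Rightarrow> 's \<Rightarrow> bool) \<Rightarrow> 's \<Rightarrow> 's \<Rightarrow> bool" where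
  "branching_bisimilar S T s t \<longleftrightarrow> (\<exists>B. branching_bisimulation S T B \<and> (s, t) \<in> B)"

definition bpa_bisim :: "'v set \<Rightarrow> ('v \<times> 'a option \<times> 'v list) set \<Rightarrow> 'v list \<Rightarrow> 'v list \<Rightarrow> bool" where
  "bpa_bisim V Rules = branching_bisimilar (lists V) (bpa_step V Rules)"

definition bpa_bisim_R :: "'v set \<Rightarrow> ('v \<times> 'a option \<times> 'v list) set \<Rightarrow> 'v set \<Rightarrow> 'v list \<Rightarrow> 'v list \<Rightarrow> bool" where
  "bpa_bisim_R V Rules R = branching_bisimilar (lists V) (bpa_step_R V Rules R)"

definition R_of :: "'v set \<Rightarrow> ('v \<times> 'a option \<times> 'v list) set \<Rightarrow> 'v list \<Rightarrow> 'v set" where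
  "R_of V Rules \<gamma> = {X \<in> V. bpa_bisim V Rules (X # \<gamma>) \<gamma>}"

end

theory Submission
  imports Defs
begin

text \<open>Both directions rest on \<open>R\<^sub>\<gamma>\<^sup>* = {\<alpha>. \<alpha>\<gamma> \<sim> \<gamma>}\<close>, which uses normedness: if
  \<open>\<alpha>\<gamma> \<sim> \<gamma>\<close>, then \<open>\<alpha>\<gamma>\<close> reaches \<open>\<epsilon>\<close> with no more visible actions than \<open>\<gamma>\<close> needs, so
  \<open>\<alpha>\<close> vanishes silently.

  \<open>\<Leftarrow>\<close>: the pairs \<open>(\<alpha>'\<gamma>, \<beta>'\<gamma>)\<close> with \<open>\<alpha>' \<sim>\<^bsub>R\<^sub>\<gamma>\<^esub> \<beta>'\<close>, together with \<open>\<sim>\<close>, form a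
  branching bisimulation. A move of \<open>\<alpha>'\<gamma>\<close> with \<open>\<alpha>' \<notin> R\<^sub>\<gamma>\<^sup>*\<close> is a move of \<open>\<alpha>'\<close> in
  \<open>\<L>\<^bsub>\<G>,R\<^sub>\<gamma>\<^esub>\<close>, answered there and lifted. If \<open>\<alpha>' \<in> R\<^sub>\<gamma>\<^sup>*\<close>, then \<open>\<alpha>'\<gamma> \<sim> \<gamma>\<close>, and
  \<open>\<beta>'\<close>, bisimilar to a deadlocked state, silently reaches some \<open>\<delta> \<in> R\<^sub>\<gamma>\<^sup>*\<close>.

  \<open>\<Rightarrow>\<close>: the pairs \<open>(\<alpha>', \<beta>')\<close> with \<open>\<alpha>'\<gamma> \<sim> \<beta>'\<gamma>\<close> form a branching bisimulation of
  \<open>\<L>\<^bsub>\<G>,R\<^sub>\<gamma>\<^esub>\<close>. A \<open>\<tau>\<close>-path answering a move of \<open>\<alpha>' \<notin> R\<^sub>\<gamma>\<^sup>*\<close> cannot pass through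
  some \<open>\<delta>\<gamma>\<close> with \<open>\<delta> \<in> R\<^sub>\<gamma>\<^sup>*\<close>: by stuttering \<open>\<alpha>'\<gamma> \<sim> \<delta>\<gamma> \<sim> \<gamma>\<close>, forcing \<open>\<alpha>' \<in> R\<^sub>\<gamma>\<^sup>*\<close>.\<close>

section \<open>Branching bisimilarity via semi-branching bisimulations\<close>

abbreviation tau_star :: "('s \<Rightarrow> 'a option \<Rightarrow> 's \<Rightarrow> bool) \<Rightarrow> 's \<Rightarrow> 's \<Rightarrow> bool" where
  "tau_star T \<equiv> (\<lambda>x y. T x None y)\<^sup>*\<^sup>*"

text \<open>Semi-branching answers: the states along the \<open>\<tau>\<close>-path need not be related.
  Branching bisimilarity is recovered by stuttering.\<close>

definition sb_match ::
    "('s \<Rightarrow> 'a option \<Rightarrow> 's \<Rightarrow> bool) \<Rightarrow> ('s \<times> 's) set \<Rightarrow> 's \<Rightarrow> 's \<Rightarrow> 'a option \<Rightarrow> 's \<Rightarrow> bool" where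
  "sb_match T B s t a s' \<longleftrightarrow>
     (a = None \<and> (\<exists>t''. tau_star T t t'' \<and> (s, t'') \<in> B \<and> (s', t'') \<in> B)) \<or>
     (\<exists>t'' t'. tau_star T t t'' \<and> T t'' a t' \<and> (s, t'') \<in> B \<and> (s', t') \<in> B)"

definition sb_transfer :: "('s \<Rightarrow> 'a option \<Rightarrow> 's \<Rightarrow> bool) \<Rightarrow> ('s \<times> 's) set \<Rightarrow> bool" where
  "sb_transfer T B \<longleftrightarrow> (\<forall>s t a s'. (s, t) \<in> B \<longrightarrow> T s a s' \<longrightarrow> sb_match T B s t a s')"

lemma sb_match_mono: "sb_match T B s t a s' \<Longrightarrow> B \<subseteq> B' \<Longrightarrow> sb_match T B' s t a s'"
  unfolding sb_match_def by blast

lemma sb_match_tau_star_prepend: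
  "tau_star T t t1 \<Longrightarrow> sb_match T B s t1 a s' \<Longrightarrow> sb_match T B s t a s'"
  unfolding sb_match_def by (meson rtranclp_trans)

lemma tau_star_map:
  assumes "\<And>s a t. T1 s a t \<Longrightarrow> T2 (f s) a (f t)" "tau_star T1 s t"
  shows "tau_star T2 (f s) (f t)"
  using assms(2) by induction (auto intro: rtranclp.rtrancl_into_rtrancl assms(1))

lemma sb_match_map:
  assumes "\<And>s a t. T1 s a t \<Longrightarrow> T2 (f s) a (f t)" "sb_match T1 B s t a s'"
  shows "sb_match T2 ((\<lambda>(x, y). (f x, f y)) ` B) (f s) (f t) a (f s')"
  using assms(2) tau_star_map[of T1 T2 f, OF assms(1)] assms(1)
  unfolding sb_match_def by (smt (verit) case_prod_conv image_eqI)

lemma path_rtranclp: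
  assumes "\<forall>i<n. P (p i) (p (Suc i))" "i \<le> j" "j \<le> n"
  shows "P\<^sup>*\<^sup>* (p i) (p j)"
  using assms(2,3)
proof (induction j)
  case (Suc j)
  then show ?case
    using assms(1) by (cases "i = Suc j") (auto intro: rtranclp.rtrancl_into_rtrancl)
qed simp

lemma bb_transfer_imp_sb_transfer: "bb_transfer T B \<Longrightarrow> sb_transfer T B"
  unfolding sb_transfer_def
proof (intro allI impI)
  fix s t a s'
  assume "bb_transfer T B" "(s, t) \<in> B" "T s a s'"
  then consider "a = None" "(s', t) \<in> B"
    | k p t' where "p 0 = t" "\<forall>i<k. T (p i) None (p (Suc i))" "T (p k) a t'" "(s', t') \<in> B"
        "\<forall>i\<in>{1..k}. (s, p i) \<in> B"
    unfolding bb_transfer_def by blast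
  then show "sb_match T B s t a s'"
  proof cases
    case 1
    then show ?thesis using \<open>(s, t) \<in> B\<close> unfolding sb_match_def by blast
  next
    case (2 k p t')
    have "tau_star T t (p k)"
      using path_rtranclp[of k "\<lambda>x y. T x None y" p 0 k] 2 by simp
    moreover have "(s, p k) \<in> B"
      using 2 \<open>(s, t) \<in> B\<close> by (cases k) auto
    ultimately show ?thesis using 2 unfolding sb_match_def by blast
  qed
qed

locale lts =
  fixes S :: "'s set" and T :: "'s \<Rightarrow> 'a option \<Rightarrow> 's \<Rightarrow> bool"
  assumes step_in_S: "T s a t \<Longrightarrow> t \<in> S"
begin

definition sb_bisimulation :: "('s \<times> 's) set \<Rightarrow> bool" where
  "sb_bisimulation B \<longleftrightarrow> B \<subseteq> S \<times> S \<and> sb_transfer T B \<and> sb_transfer T (B\<inverse>)"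

definition bisim :: "'s \<Rightarrow> 's \<Rightarrow> bool" where
  "bisim s t \<longleftrightarrow> (\<exists>B. sb_bisimulation B \<and> (s, t) \<in> B)"

lemma bisimI: "sb_bisimulation B \<Longrightarrow> (s, t) \<in> B \<Longrightarrow> bisim s t"
  unfolding bisim_def by blast

lemma sb_bisimulation_symI: "B \<subseteq> S \<times> S \<Longrightarrow> B\<inverse> = B \<Longrightarrow> sb_transfer T B \<Longrightarrow> sb_bisimulation B"
  unfolding sb_bisimulation_def by simp

lemma tau_star_in_S: "tau_star T s t \<Longrightarrow> s \<in> S \<Longrightarrow> t \<in> S"
  by (induction rule: rtranclp_induct) (auto intro: step_in_S)

lemma sb_transfer_tau_star:
  assumes "sb_transfer T B" "(x, y) \<in> B" "tau_star T x x'"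
  shows "\<exists>y'. tau_star T y y' \<and> (x', y') \<in> B"
  using assms(3)
proof (induction rule: rtranclp_induct)
  case (step x1 x2)
  then obtain y1 where "tau_star T y y1" "(x1, y1) \<in> B" by blast
  moreover have "sb_match T B x1 y1 None x2"
    using assms(1) \<open>(x1, y1) \<in> B\<close> step(2) unfolding sb_transfer_def by blast
  ultimately show ?case
    unfolding sb_match_def by (meson rtranclp.rtrancl_into_rtrancl rtranclp_trans)
qed (use assms(2) in blast)

lemma sb_transfer_relcomp:
  assumes "sb_transfer T B1" "sb_transfer T B2"
  shows "sb_transfer T (B1 O B2)"
  unfolding sb_transfer_def
proof (intro allI impI)
  fix s u a s'
  assume "(s, u) \<in> B1 O B2" and step: "T s a s'"
  then obtain t where st: "(s, t) \<in> B1" and tu: "(t, u) \<in> B2" by blast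
  have "sb_match T B1 s t a s'" using assms(1) st step unfolding sb_transfer_def by blast
  then consider t1 where "a = None" "tau_star T t t1" "(s, t1) \<in> B1" "(s', t1) \<in> B1"
    | t1 t2 where "tau_star T t t1" "T t1 a t2" "(s, t1) \<in> B1" "(s', t2) \<in> B1"
    unfolding sb_match_def by blast
  then show "sb_match T (B1 O B2) s u a s'"
  proof cases
    case (1 t1)
    obtain u1 where "tau_star T u u1" "(t1, u1) \<in> B2"
      using sb_transfer_tau_star[OF assms(2) tu 1(2)] by blast
    then show ?thesis using 1 unfolding sb_match_def by blast
  next
    case (2 t1 t2)
    obtain u1 where u1: "tau_star T u u1" "(t1, u1) \<in> B2"
      using sb_transfer_tau_star[OF assms(2) tu 2(1)] by blast
    have "sb_match T B2 t1 u1 a t2" using assms(2) u1(2) 2(2) unfolding sb_transfer_def by blast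
    then show ?thesis
      using 2 u1(1) unfolding sb_match_def by (meson relcomp.relcompI rtranclp_trans)
  qed
qed

lemma bisim_in_S: "bisim s t \<Longrightarrow> s \<in> S \<and> t \<in> S"
  unfolding bisim_def sb_bisimulation_def by blast

lemma bisim_refl: "s \<in> S \<Longrightarrow> bisim s s"
proof (rule bisimI)
  show "sb_bisimulation (Id_on S)"
    unfolding sb_bisimulation_def sb_transfer_def sb_match_def using step_in_S by blast
qed auto

lemma bisim_sym: "bisim s t \<Longrightarrow> bisim t s"
  unfolding bisim_def sb_bisimulation_def by (metis converse_converse converse_iff converse_Times converse_mono)

lemma bisim_trans: "bisim s t \<Longrightarrow> bisim t u \<Longrightarrow> bisim s u"
proof -
  assume "bisim s t" "bisim t u"
  then obtain B1 B2 where "sb_bisimulation B1" "sb_bisimulation B2" "(s, u) \<in> B1 O B2"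
    unfolding bisim_def by blast
  moreover have "sb_bisimulation (B1 O B2)" if "sb_bisimulation B1" "sb_bisimulation B2" for B1 B2
    using that sb_transfer_relcomp[of B1 B2] sb_transfer_relcomp[of "B2\<inverse>" "B1\<inverse>"]
    unfolding sb_bisimulation_def by (auto simp: converse_relcomp)
  ultimately show ?thesis by (blast intro: bisimI)
qed

lemma sb_transfer_bisim: "sb_transfer T {(s, t). bisim s t}"
  unfolding sb_transfer_def
proof (intro allI impI)
  fix s t a s'
  assume "(s, t) \<in> {(s, t). bisim s t}" "T s a s'"
  then obtain B where "sb_bisimulation B" "(s, t) \<in> B" unfolding bisim_def by blast
  then have "sb_match T B s t a s'"
    using \<open>T s a s'\<close> unfolding sb_bisimulation_def sb_transfer_def by blast
  moreover have "B \<subseteq> {(s, t). bisim s t}" using \<open>sb_bisimulation B\<close> by (auto intro: bisimI)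
  ultimately show "sb_match T {(s, t). bisim s t} s t a s'" by (rule sb_match_mono)
qed

lemma bisim_step: "bisim s t \<Longrightarrow> T s a s' \<Longrightarrow> sb_match T {(s, t). bisim s t} s t a s'"
  using sb_transfer_bisim unfolding sb_transfer_def by blast

lemma bisim_step_mono:
  "bisim s t \<Longrightarrow> T s a s' \<Longrightarrow> {(s, t). bisim s t} \<subseteq> B \<Longrightarrow> sb_match T B s t a s'"
  by (rule sb_match_mono[OF bisim_step])

lemma bisim_tau_star: "bisim x y \<Longrightarrow> tau_star T x x' \<Longrightarrow> \<exists>y'. tau_star T y y' \<and> bisim x' y'"
  using sb_transfer_tau_star[OF sb_transfer_bisim, of x y x'] by simp

lemma bisim_stutter:
  assumes "bisim s t0" "tau_star T t0 t" "tau_star T t tk" "bisim s tk"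
  shows "bisim s t"
proof -
  define B1 where "B1 = {(x, u). tau_star T t0 x \<and> tau_star T x tk \<and> bisim u tk}"
  define B where "B = {(s, t). bisim s t} \<union> B1 \<union> B1\<inverse>"
  have bisim_tk: "bisim t0 tk" using assms(1,4) bisim_sym bisim_trans by blast
  have "sb_bisimulation B"
  proof (rule sb_bisimulation_symI)
    have "t0 \<in> S" using bisim_in_S bisim_tk by blast
    then show "B \<subseteq> S \<times> S"
      unfolding B_def B1_def using bisim_in_S tau_star_in_S by blast
    have "{(s, t). bisim s t}\<inverse> = {(s, t). bisim s t}" using bisim_sym by blast
    then show "B\<inverse> = B" unfolding B_def converse_Un by blast
    show "sb_transfer T B" unfolding sb_transfer_def
    proof (intro allI impI)
      fix x y a x'
      assume "(x, y) \<in> B" and step: "T x a x'"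
      have sub: "{(s, t). bisim s t} \<subseteq> B" unfolding B_def by blast
      consider "bisim x y" | "(x, y) \<in> B1" | "(y, x) \<in> B1" using \<open>(x, y) \<in> B\<close> unfolding B_def by blast
      then show "sb_match T B x y a x'"
      proof cases
        case 1
        then show ?thesis using bisim_step_mono[OF _ step sub] by blast
      next
        case 2
        then have "tau_star T t0 x" "bisim y tk" unfolding B1_def by auto
        then have "bisim t0 y" using bisim_tk bisim_sym bisim_trans by blast
        then obtain y1 where "tau_star T y y1" "bisim x y1"
          using bisim_tau_star \<open>tau_star T t0 x\<close> by blast
        then show ?thesis
          using sb_match_tau_star_prepend[OF _ bisim_step_mono[OF \<open>bisim x y1\<close> step sub]] by blast
      next
        case 3
        then have "tau_star T y tk" "bisim x tk" unfolding B1_def by auto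
        then show ?thesis
          using sb_match_tau_star_prepend[OF _ bisim_step_mono[OF \<open>bisim x tk\<close> step sub]] by blast
      qed
    qed
  qed
  moreover have "bisim tk tk" using bisim_refl bisim_in_S bisim_tk by blast
  then have "(t, tk) \<in> B" unfolding B_def B1_def using assms(2,3) by blast
  ultimately have "bisim t tk" by (rule bisimI)
  then show ?thesis using assms(4) bisim_sym bisim_trans by blast
qed

lemma bisim_deadlock:
  assumes "\<And>a u. \<not> T t a u" "bisim s t" "T s a s'"
  shows "a = None \<and> bisim s' t"
proof -
  have "tau_star T t t'' \<Longrightarrow> t'' = t" for t''
    by (metis assms(1) converse_rtranclpE)
  then show ?thesis using bisim_step[OF assms(2,3)] assms(1) unfolding sb_match_def by blast
qed

lemma bisim_answer_path:
  assumes "bisim s t" "tau_star T t t1" "bisim s t1" "T t1 a t2" "bisim s' t2"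
  shows "\<exists>k p t'. p 0 = t \<and> (\<forall>i<k. T (p i) None (p (Suc i))) \<and> T (p k) a t' \<and>
           bisim s' t' \<and> (\<forall>i\<in>{1..k}. bisim s (p i))"
proof -
  obtain k where "((\<lambda>x y. T x None y) ^^ k) t t1" using assms(2) rtranclp_imp_relpowp by metis
  then obtain p where p: "p 0 = t" "p k = t1" "\<forall>i<k. T (p i) None (p (Suc i))"
    unfolding relpowp_fun_conv by blast
  have "bisim s (p i)" if "i \<in> {1..k}" for i
  proof (rule bisim_stutter[OF assms(1) _ _ assms(3)])
    show "tau_star T t (p i)" using path_rtranclp[of k _ p 0 i] that p by simp
    show "tau_star T (p i) t1" using path_rtranclp[of k _ p i k] that p by simp
  qed
  then show ?thesis using p assms(4,5) by (intro exI[of _ k] exI[of _ p] exI[of _ t2]) auto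
qed

lemma bb_transfer_bisim: "bb_transfer T {(s, t). bisim s t}"
  unfolding bb_transfer_def
proof (intro allI impI)
  fix s t a s'
  assume "(s, t) \<in> {(s, t). bisim s t}" "T s a s'"
  then have st: "bisim s t" by simp
  from bisim_step[OF st \<open>T s a s'\<close>]
  consider t1 where "a = None" "tau_star T t t1" "bisim s t1" "bisim s' t1"
    | t1 t2 where "tau_star T t t1" "T t1 a t2" "bisim s t1" "bisim s' t2"
    unfolding sb_match_def by blast
  then have "(a = None \<and> bisim s' t) \<or>
      (\<exists>k p t'. p 0 = t \<and> (\<forall>i<k. T (p i) None (p (Suc i))) \<and> T (p k) a t' \<and>
         bisim s' t' \<and> (\<forall>i\<in>{1..k}. bisim s (p i)))"
  proof cases
    case (1 t1)
    \<comment> \<open>a silent answer that ends in a \<open>\<tau>\<close>-step is an instance of the second form\<close>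
    from \<open>tau_star T t t1\<close> show ?thesis
    proof (cases rule: rtranclp.cases)
      case (rtrancl_into_rtrancl t0)
      then have "bisim s t0" using bisim_stutter[OF st _ _ \<open>bisim s t1\<close>] by blast
      then show ?thesis
        using bisim_answer_path[OF st \<open>tau_star T t t0\<close>] rtrancl_into_rtrancl 1 by blast
    qed (use 1 in blast)
  next
    case (2 t1 t2)
    then show ?thesis using bisim_answer_path[OF st] by blast
  qed
  then show "a = None \<and> (s', t) \<in> {(s, t). bisim s t} \<or>
      (\<exists>k p t'. p 0 = t \<and> (\<forall>i<k. T (p i) None (p (Suc i))) \<and> T (p k) a t' \<and>
         (s', t') \<in> {(s, t). bisim s t} \<and> (\<forall>i\<in>{1..k}. (s, p i) \<in> {(s, t). bisim s t}))"
    by simp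
qed

lemma branching_bisimilar_iff_bisim: "branching_bisimilar S T = bisim"
proof (intro ext iffI)
  fix s t
  assume "branching_bisimilar S T s t"
  then show "bisim s t"
    unfolding branching_bisimilar_def branching_bisimulation_def
    by (metis bb_transfer_imp_sb_transfer bisimI sb_bisimulation_def)
next
  fix s t
  assume "bisim s t"
  have "{(s, t). bisim s t}\<inverse> = {(s, t). bisim s t}" using bisim_sym by blast
  then have "branching_bisimulation S T {(s, t). bisim s t}"
    unfolding branching_bisimulation_def using bb_transfer_bisim bisim_in_S by auto
  then show "branching_bisimilar S T s t"
    unfolding branching_bisimilar_def using \<open>bisim s t\<close> by blast
qed

end

section \<open>Reachability counting visible actions\<close>

inductive vis_reach :: "('s \<Rightarrow> 'a option \<Rightarrow> 's \<Rightarrow> bool) \<Rightarrow> 's \<Rightarrow> nat \<Rightarrow> 's \<Rightarrow> bool" for T where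
  vis_reach_refl: "vis_reach T s 0 s"
| vis_reach_tau: "T s None s' \<Longrightarrow> vis_reach T s' n u \<Longrightarrow> vis_reach T s n u"
| vis_reach_visible: "T s (Some b) s' \<Longrightarrow> vis_reach T s' n u \<Longrightarrow> vis_reach T s (Suc n) u"

lemma vis_reach_tau_star_prepend: "tau_star T s t \<Longrightarrow> vis_reach T t n u \<Longrightarrow> vis_reach T s n u"
  by (induction rule: converse_rtranclp_induct) (auto intro: vis_reach_tau)

lemma vis_reach_0_iff: "vis_reach T s 0 u \<longleftrightarrow> tau_star T s u"
proof
  show "vis_reach T s 0 u \<Longrightarrow> tau_star T s u"
    by (induction s "0::nat" u rule: vis_reach.induct) (auto intro: converse_rtranclp_into_rtranclp)
  show "tau_star T s u \<Longrightarrow> vis_reach T s 0 u"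
    using vis_reach_tau_star_prepend vis_reach_refl by metis
qed

lemma vis_reach_trans: "vis_reach T s m u \<Longrightarrow> vis_reach T u n w \<Longrightarrow> vis_reach T s (m + n) w"
  by (induction rule: vis_reach.induct) (auto intro: vis_reach.intros)

lemma rtranclp_imp_vis_reach: "(\<lambda>s t. \<exists>a. T s a t)\<^sup>*\<^sup>* s u \<Longrightarrow> \<exists>n. vis_reach T s n u"
proof (induction rule: converse_rtranclp_induct)
  case (step x y)
  then obtain a n where "T x a y" "vis_reach T y n u" by blast
  then show ?case by (cases a) (auto intro: vis_reach.intros)
qed (auto intro: vis_reach_refl)

context lts
begin

lemma bisim_vis_reach: "vis_reach T t n u \<Longrightarrow> bisim s t \<Longrightarrow> \<exists>u'. vis_reach T s n u' \<and> bisim u' u"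
proof (induction arbitrary: s rule: vis_reach.induct)
  case (vis_reach_refl t)
  then show ?case using vis_reach.vis_reach_refl by metis
next
  case (vis_reach_tau t t' n u)
  have "sb_match T {(s, t). bisim s t} t s None t'"
    using bisim_step[OF bisim_sym[OF vis_reach_tau.prems] vis_reach_tau.hyps(1)] .
  then obtain s' where "tau_star T s s'" "bisim t' s'"
    unfolding sb_match_def by (auto intro: rtranclp.rtrancl_into_rtrancl)
  moreover obtain u' where "vis_reach T s' n u'" "bisim u' u"
    using vis_reach_tau.IH[OF bisim_sym[OF \<open>bisim t' s'\<close>]] by blast
  ultimately show ?case using vis_reach_tau_star_prepend by metis
next
  case (vis_reach_visible t b t' n u)
  have "sb_match T {(s, t). bisim s t} t s (Some b) t'"
    using bisim_step[OF bisim_sym[OF vis_reach_visible.prems] vis_reach_visible.hyps(1)] .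
  then obtain s1 s2 where "tau_star T s s1" "T s1 (Some b) s2" "bisim t' s2"
    unfolding sb_match_def by auto
  moreover obtain u' where "vis_reach T s2 n u'" "bisim u' u"
    using vis_reach_visible.IH[OF bisim_sym[OF \<open>bisim t' s2\<close>]] by blast
  ultimately show ?case using vis_reach.vis_reach_visible vis_reach_tau_star_prepend by metis
qed

end

section \<open>Normed BPA\<close>

locale normed_bpa =
  fixes V :: "'v set" and Act :: "'a option set" and Rules :: "('v \<times> 'a option \<times> 'v list) set"
  assumes bpa: "bpa V Act Rules" and normed: "normed V Rules"
begin

abbreviation reach :: "'v list \<Rightarrow> 'v list \<Rightarrow> bool" where
  "reach \<equiv> (\<lambda>s t. \<exists>a. bpa_step V Rules s a t)\<^sup>*\<^sup>*"

lemma step_in_lists: "bpa_step V Rules s a t \<Longrightarrow> t \<in> lists V"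
  using bpa unfolding bpa_def bpa_step_def by fastforce

sublocale G: lts "lists V" "bpa_step V Rules"
  by unfold_locales (rule step_in_lists)

lemma bpa_bisim_eq: "bpa_bisim V Rules = G.bisim"
  unfolding bpa_bisim_def by (rule G.branching_bisimilar_iff_bisim)

lemma no_step_Nil: "\<not> bpa_step V Rules [] a t"
  unfolding bpa_step_def by auto

lemma step_append: "bpa_step V Rules s a t \<Longrightarrow> \<gamma> \<in> lists V \<Longrightarrow> bpa_step V Rules (s @ \<gamma>) a (t @ \<gamma>)"
  unfolding bpa_step_def by force

lemma step_append_nonempty:
  assumes "bpa_step V Rules (s @ \<gamma>) a w" "s \<noteq> []"
  obtains s' where "bpa_step V Rules s a s'" "w = s' @ \<gamma>"
proof -
  obtain A \<alpha> \<beta> where r: "(A, a, \<alpha>) \<in> Rules" "\<beta> \<in> lists V" "s @ \<gamma> = A # \<beta>" "w = \<alpha> @ \<beta>"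
    using assms(1) unfolding bpa_step_def by blast
  obtain s1 where "s = A # s1" "\<beta> = s1 @ \<gamma>" using assms(2) r(3) by (cases s) auto
  then show ?thesis using r that unfolding bpa_step_def by auto
qed

lemma tau_star_append:
  "tau_star (bpa_step V Rules) s t \<Longrightarrow> \<gamma> \<in> lists V \<Longrightarrow> tau_star (bpa_step V Rules) (s @ \<gamma>) (t @ \<gamma>)"
  using tau_star_map[of "bpa_step V Rules" _ "\<lambda>x. x @ \<gamma>"] step_append by blast

lemma reach_append: "reach s t \<Longrightarrow> \<gamma> \<in> lists V \<Longrightarrow> reach (s @ \<gamma>) (t @ \<gamma>)"
  by (induction rule: rtranclp_induct) (auto intro: rtranclp.rtrancl_into_rtrancl step_append)

lemma reach_Nil: "\<beta> \<in> lists V \<Longrightarrow> reach \<beta> []"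
proof (induction \<beta>)
  case (Cons X \<beta>)
  have "reach [X] []" using normed Cons.prems unfolding normed_def by auto
  then have "reach (X # \<beta>) \<beta>" using reach_append[of "[X]" "[]" \<beta>] Cons.prems by simp
  then show ?case using Cons by (auto intro: rtranclp_trans)
qed simp

lemma bisim_Nil_tau_star:
  assumes "G.bisim x []"
  shows "tau_star (bpa_step V Rules) x []"
proof -
  have "tau_star (bpa_step V Rules) s y" if "reach s y" "G.bisim s []" for s y
    using that
  proof (induction rule: converse_rtranclp_induct)
    case (step x x1)
    then obtain a where "bpa_step V Rules x a x1" by blast
    with G.bisim_deadlock[OF no_step_Nil step.prems] step.IH show ?case
      by (auto intro: converse_rtranclp_into_rtranclp)
  qed simp
  then show ?thesis using assms reach_Nil G.bisim_in_S by blast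
qed

lemma bisim_vis_reach_Nil:
  "G.bisim s t \<Longrightarrow> vis_reach (bpa_step V Rules) t n [] \<Longrightarrow> vis_reach (bpa_step V Rules) s n []"
  using G.bisim_vis_reach vis_reach_trans[where n = 0] bisim_Nil_tau_star vis_reach_0_iff
  by (metis add.right_neutral)

lemma vis_reach_append_Nil:
  "vis_reach (bpa_step V Rules) (\<alpha> @ \<gamma>) n [] \<Longrightarrow>
     \<exists>k\<le>n. vis_reach (bpa_step V Rules) \<alpha> k [] \<and> vis_reach (bpa_step V Rules) \<gamma> (n - k) []"
proof (induction "\<alpha> @ \<gamma>" n "[] :: 'v list" arbitrary: \<alpha> rule: vis_reach.induct)
  case vis_reach_refl
  then show ?case by (auto intro: vis_reach.vis_reach_refl)
next
  case (vis_reach_tau s' n)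
  show ?case
  proof (cases "\<alpha> = []")
    case True
    then show ?thesis using vis_reach.vis_reach_tau[OF vis_reach_tau.hyps(1,2)]
      by (auto intro: vis_reach.vis_reach_refl)
  next
    case False
    then obtain \<alpha>' where "bpa_step V Rules \<alpha> None \<alpha>'" "s' = \<alpha>' @ \<gamma>"
      using step_append_nonempty vis_reach_tau.hyps(1) by metis
    then show ?thesis using vis_reach_tau.hyps(3) vis_reach.vis_reach_tau by metis
  qed
next
  case (vis_reach_visible b s' n)
  show ?case
  proof (cases "\<alpha> = []")
    case True
    then show ?thesis using vis_reach.vis_reach_visible[OF vis_reach_visible.hyps(1,2)]
      by (auto intro: vis_reach.vis_reach_refl)
  next
    case False
    then obtain \<alpha>' where "bpa_step V Rules \<alpha> (Some b) \<alpha>'" "s' = \<alpha>' @ \<gamma>"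
      using step_append_nonempty vis_reach_visible.hyps(1) by metis
    then obtain k where "k \<le> n" "vis_reach (bpa_step V Rules) \<alpha> (Suc k) []"
        "vis_reach (bpa_step V Rules) \<gamma> (n - k) []"
      using vis_reach_visible.hyps(3) vis_reach.vis_reach_visible by metis
    then show ?thesis by (intro exI[of _ "Suc k"]) auto
  qed
qed

text \<open>Choose \<open>m\<close> minimal; \<open>\<alpha>\<gamma> \<sim> \<gamma>\<close> lets \<open>\<alpha>\<gamma>\<close> reach \<open>\<epsilon>\<close> with \<open>m\<close> visible actions, \<open>k\<close> of them
  spent on \<open>\<alpha>\<close>, and minimality forces \<open>k = 0\<close>.\<close>

lemma tau_star_Nil_if_bisim_append:
  assumes "\<gamma> \<in> lists V" "G.bisim (\<alpha> @ \<gamma>) \<gamma>"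
  shows "tau_star (bpa_step V Rules) \<alpha> []"
proof -
  let ?T = "bpa_step V Rules"
  obtain n where "vis_reach ?T \<gamma> n []" using rtranclp_imp_vis_reach[OF reach_Nil[OF assms(1)]] ..
  define m where "m = (LEAST n. vis_reach ?T \<gamma> n [])"
  have "vis_reach ?T \<gamma> m []" unfolding m_def using \<open>vis_reach ?T \<gamma> n []\<close> by (rule LeastI)
  then have "vis_reach ?T (\<alpha> @ \<gamma>) m []" by (rule bisim_vis_reach_Nil[OF assms(2)])
  then obtain k where "k \<le> m" "vis_reach ?T \<alpha> k []" "vis_reach ?T \<gamma> (m - k) []"
    using vis_reach_append_Nil by blast
  moreover have "m \<le> m - k" using \<open>vis_reach ?T \<gamma> (m - k) []\<close> unfolding m_def by (rule Least_le)
  ultimately have "k = 0" by arith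
  then show ?thesis using \<open>vis_reach ?T \<alpha> k []\<close> by (simp add: vis_reach_0_iff)
qed

lemma bisim_prepend:
  assumes "G.bisim \<delta> \<delta>'" "\<alpha> \<in> lists V"
  shows "G.bisim (\<alpha> @ \<delta>) (\<alpha> @ \<delta>')"
proof (rule G.bisimI)
  define B where "B = {(\<alpha> @ \<delta>, \<alpha> @ \<delta>') | \<alpha> \<delta> \<delta>'. \<alpha> \<in> lists V \<and> G.bisim \<delta> \<delta>'}"
  show "(\<alpha> @ \<delta>, \<alpha> @ \<delta>') \<in> B" unfolding B_def using assms by blast
  show "G.sb_bisimulation B"
  proof (rule G.sb_bisimulation_symI)
    show "B \<subseteq> lists V \<times> lists V" unfolding B_def using G.bisim_in_S by fastforce
    show "B\<inverse> = B" unfolding B_def using G.bisim_sym by blast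
    show "sb_transfer (bpa_step V Rules) B" unfolding sb_transfer_def
    proof (intro allI impI)
      fix x y a x'
      assume "(x, y) \<in> B" and step: "bpa_step V Rules x a x'"
      then obtain \<alpha> \<delta> \<delta>' where xy: "x = \<alpha> @ \<delta>" "y = \<alpha> @ \<delta>'" "\<alpha> \<in> lists V" "G.bisim \<delta> \<delta>'"
        unfolding B_def by blast
      show "sb_match (bpa_step V Rules) B x y a x'"
      proof (cases "\<alpha> = []")
        case True
        have "{(s, t). G.bisim s t} \<subseteq> B" unfolding B_def by force
        moreover have "G.bisim x y" "bpa_step V Rules x a x'" using xy step True by simp_all
        ultimately show ?thesis using G.bisim_step_mono by blast
      next
        case False
        then obtain \<alpha>' where "bpa_step V Rules \<alpha> a \<alpha>'" "x' = \<alpha>' @ \<delta>"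
          using step_append_nonempty step xy(1) by metis
        moreover have "\<delta>' \<in> lists V" using G.bisim_in_S xy(4) by blast
        ultimately have "bpa_step V Rules y a (\<alpha>' @ \<delta>')"
          using xy(2) step_append by simp
        moreover have "\<alpha>' \<in> lists V" using step_in_lists \<open>bpa_step V Rules \<alpha> a \<alpha>'\<close> .
        then have "(x, y) \<in> B" "(x', \<alpha>' @ \<delta>') \<in> B"
          unfolding B_def using xy \<open>x' = \<alpha>' @ \<delta>\<close> by blast+
        ultimately show ?thesis unfolding sb_match_def by blast
      qed
    qed
  qed
qed

lemma in_lists_R_of_iff:
  assumes "\<gamma> \<in> lists V"
  shows "\<alpha> \<in> lists V \<Longrightarrow> \<alpha> \<in> lists (R_of V Rules \<gamma>) \<longleftrightarrow> G.bisim (\<alpha> @ \<gamma>) \<gamma>"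
proof (induction \<alpha>)
  case Nil
  then show ?case using G.bisim_refl assms by simp
next
  case (Cons X \<alpha>)
  let ?T = "bpa_step V Rules"
  have X_\<alpha>: "X \<in> V" "\<alpha> \<in> lists V" using Cons.prems by auto
  have "G.bisim (X # \<alpha> @ \<gamma>) (X # \<gamma>)" if "G.bisim (\<alpha> @ \<gamma>) \<gamma>"
    using bisim_prepend[OF that, of "[X]"] X_\<alpha> by simp
  moreover have "G.bisim (\<alpha> @ \<gamma>) \<gamma>" if "G.bisim (X # \<alpha> @ \<gamma>) \<gamma>"
  proof -
    \<comment> \<open>\<open>X\<alpha>\<close> vanishes silently, passing through \<open>\<alpha>\<gamma>\<close>: stuttering\<close>
    have "tau_star ?T ([X] @ \<alpha>) []" using tau_star_Nil_if_bisim_append[OF assms] that by simp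
    then have "vis_reach ?T ([X] @ \<alpha>) 0 []" by (simp add: vis_reach_0_iff)
    then obtain k where "k \<le> 0" "vis_reach ?T [X] k []" "vis_reach ?T \<alpha> (0 - k) []"
      using vis_reach_append_Nil by blast
    then have "tau_star ?T [X] []" "tau_star ?T \<alpha> []" by (simp_all add: vis_reach_0_iff)
    then have "tau_star ?T ([X] @ \<alpha> @ \<gamma>) ([] @ \<alpha> @ \<gamma>)" "tau_star ?T (\<alpha> @ \<gamma>) ([] @ \<gamma>)"
      using tau_star_append assms X_\<alpha> by (simp_all only: append_in_lists_conv)
    then have "tau_star ?T (X # \<alpha> @ \<gamma>) (\<alpha> @ \<gamma>)" "tau_star ?T (\<alpha> @ \<gamma>) \<gamma>" by simp_all
    moreover have "G.bisim \<gamma> \<gamma>" using G.bisim_refl assms by blast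
    ultimately have "G.bisim \<gamma> (\<alpha> @ \<gamma>)" using G.bisim_stutter[OF G.bisim_sym[OF that]] by blast
    then show ?thesis by (rule G.bisim_sym)
  qed
  ultimately have "G.bisim (X # \<gamma>) \<gamma> \<and> G.bisim (\<alpha> @ \<gamma>) \<gamma> \<longleftrightarrow> G.bisim (X # \<alpha> @ \<gamma>) \<gamma>"
    by (meson G.bisim_sym G.bisim_trans)
  then show ?case using Cons.IH X_\<alpha> unfolding R_of_def bpa_bisim_eq by simp
qed

end

section \<open>Restricted LTS and the decomposition of \<open>\<alpha>\<gamma> \<sim> \<beta>\<gamma>\<close>\<close>

locale normed_bpa_restriction = normed_bpa V Act Rules
  for V :: "'v set" and Act :: "'a option set" and Rules :: "('v \<times> 'a option \<times> 'v list) set" +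
  fixes R :: "'v set"
begin

lemma step_R_in_lists: "bpa_step_R V Rules R s a t \<Longrightarrow> t \<in> lists V"
  unfolding bpa_step_R_def using step_in_lists by blast

sublocale H: lts "lists V" "bpa_step_R V Rules R"
  by unfold_locales (rule step_R_in_lists)

lemma bpa_bisim_R_eq: "bpa_bisim_R V Rules R = H.bisim"
  unfolding bpa_bisim_R_def by (rule H.branching_bisimilar_iff_bisim)

lemma step_R_append:
  "bpa_step_R V Rules R s a t \<Longrightarrow> \<gamma> \<in> lists V \<Longrightarrow> bpa_step V Rules (s @ \<gamma>) a (t @ \<gamma>)"
  unfolding bpa_step_R_def by (simp add: step_append)

lemma tau_star_R_append:
  "tau_star (bpa_step_R V Rules R) s t \<Longrightarrow> \<gamma> \<in> lists V \<Longrightarrow>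
     tau_star (bpa_step V Rules) (s @ \<gamma>) (t @ \<gamma>)"
  using tau_star_map[of "bpa_step_R V Rules R" _ "\<lambda>x. x @ \<gamma>"] step_R_append by blast

text \<open>Follow the normed path of \<open>\<beta>\<close> to \<open>\<epsilon>\<close>: until it enters \<open>R\<^sup>*\<close>, each move is a move
  of the restricted LTS and hence silent, since the partner \<open>\<delta>0\<close> is deadlocked.\<close>

lemma bisim_R_deadlocked_tau_star:
  assumes "H.bisim \<beta> \<delta>0" "\<delta>0 \<in> lists R"
  obtains \<delta> where "\<delta> \<in> lists R" "tau_star (bpa_step V Rules) \<beta> \<delta>"
proof -
  have deadlock: "\<not> bpa_step_R V Rules R \<delta>0 a u" for a u
    using assms(2) unfolding bpa_step_R_def by simp
  have "\<exists>\<delta>\<in>lists R. tau_star (bpa_step V Rules) x \<delta>" if "reach x []" "H.bisim x \<delta>0" for x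
    using that
  proof (induction rule: converse_rtranclp_induct)
    case (step x x1)
    show ?case
    proof (cases "x \<in> lists R")
      case False
      obtain a where "bpa_step V Rules x a x1" using step(1) by blast
      with False have "bpa_step_R V Rules R x a x1" unfolding bpa_step_R_def by simp
      with H.bisim_deadlock[OF deadlock step.prems] have "a = None" "H.bisim x1 \<delta>0" by auto
      then show ?thesis
        using step.IH \<open>bpa_step V Rules x a x1\<close> by (blast intro: converse_rtranclp_into_rtranclp)
    qed blast
  qed blast
  then show ?thesis using that reach_Nil H.bisim_in_S assms(1) by blast
qed

lemma tau_star_append_cases:
  assumes "\<gamma> \<in> lists V" "tau_star (bpa_step V Rules) (\<beta> @ \<gamma>) w"
  shows "(\<exists>\<beta>'. tau_star (bpa_step_R V Rules R) \<beta> \<beta>' \<and> w = \<beta>' @ \<gamma>) \<or>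
    (\<exists>\<delta>\<in>lists R. tau_star (bpa_step V Rules) (\<beta> @ \<gamma>) (\<delta> @ \<gamma>) \<and> tau_star (bpa_step V Rules) (\<delta> @ \<gamma>) w)"
  using assms(2)
proof (induction rule: rtranclp_induct)
  case (step w w')
  from step.IH show ?case
  proof
    assume "\<exists>\<beta>'. tau_star (bpa_step_R V Rules R) \<beta> \<beta>' \<and> w = \<beta>' @ \<gamma>"
    then obtain \<beta>' where \<beta>': "tau_star (bpa_step_R V Rules R) \<beta> \<beta>'" "w = \<beta>' @ \<gamma>" by blast
    show ?thesis
    proof (cases "\<beta>' \<in> lists R")
      case True
      then show ?thesis
        using tau_star_R_append[OF \<beta>'(1) assms(1)] \<beta>'(2) step(2) by (blast intro: r_into_rtranclp)
    next
      case False
      then have "\<beta>' \<noteq> []" by auto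
      then obtain \<beta>'' where "bpa_step V Rules \<beta>' None \<beta>''" "w' = \<beta>'' @ \<gamma>"
        using step_append_nonempty step(2) \<beta>'(2) by metis
      with False have "tau_star (bpa_step_R V Rules R) \<beta> \<beta>''" "w' = \<beta>'' @ \<gamma>"
        using \<beta>'(1) unfolding bpa_step_R_def by (auto intro: rtranclp.rtrancl_into_rtrancl)
      then show ?thesis by blast
    qed
  next
    assume "\<exists>\<delta>\<in>lists R. tau_star (bpa_step V Rules) (\<beta> @ \<gamma>) (\<delta> @ \<gamma>) \<and>
      tau_star (bpa_step V Rules) (\<delta> @ \<gamma>) w"
    then show ?thesis using step(2) by (meson rtranclp.rtrancl_into_rtrancl)
  qed
qed blast

end

locale bpa_context = normed_bpa V Act Rules
  for V :: "'v set" and Act :: "'a option set" and Rules :: "('v \<times> 'a option \<times> 'v list) set" +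
  fixes \<gamma> :: "'v list"
  assumes \<gamma>_in_lists: "\<gamma> \<in> lists V"

sublocale bpa_context \<subseteq> normed_bpa_restriction V Act Rules "R_of V Rules \<gamma>"
  by unfold_locales

context bpa_context
begin

lemma bisim_append_if_in_lists_R_of: "\<delta> \<in> lists (R_of V Rules \<gamma>) \<Longrightarrow> G.bisim (\<delta> @ \<gamma>) \<gamma>"
  using in_lists_R_of_iff[OF \<gamma>_in_lists, of \<delta>] unfolding R_of_def by blast

lemma in_lists_R_of_if_bisim_append:
  assumes "\<alpha> \<in> lists V" "G.bisim (\<alpha> @ \<gamma>) (\<delta> @ \<gamma>)" "\<delta> \<in> lists (R_of V Rules \<gamma>)"
  shows "\<alpha> \<in> lists (R_of V Rules \<gamma>)"
proof -
  have "G.bisim (\<alpha> @ \<gamma>) \<gamma>" using G.bisim_trans[OF assms(2) bisim_append_if_in_lists_R_of[OF assms(3)]] .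
  then show ?thesis using in_lists_R_of_iff[OF \<gamma>_in_lists assms(1)] by blast
qed

lemma bisim_append_if_bisim_R:
  assumes "H.bisim \<alpha> \<beta>"
  shows "G.bisim (\<alpha> @ \<gamma>) (\<beta> @ \<gamma>)"
proof (rule G.bisimI)
  define B where "B = (\<lambda>(x, y). (x @ \<gamma>, y @ \<gamma>)) ` {(x, y). H.bisim x y} \<union> {(s, t). G.bisim s t}"
  show "(\<alpha> @ \<gamma>, \<beta> @ \<gamma>) \<in> B" unfolding B_def using assms by force
  show "G.sb_bisimulation B"
  proof (rule G.sb_bisimulation_symI)
    show "B \<subseteq> lists V \<times> lists V"
      unfolding B_def using \<gamma>_in_lists by (auto dest!: H.bisim_in_S G.bisim_in_S)
    show "B\<inverse> = B" unfolding B_def by (auto simp: image_iff intro: H.bisim_sym G.bisim_sym)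
    show "sb_transfer (bpa_step V Rules) B" unfolding sb_transfer_def
    proof (intro allI impI)
      fix x y a x'
      assume "(x, y) \<in> B" and step: "bpa_step V Rules x a x'"
      have G_sub: "{(s, t). G.bisim s t} \<subseteq> B" unfolding B_def by blast
      consider "G.bisim x y" | \<alpha>' \<beta>' where "x = \<alpha>' @ \<gamma>" "y = \<beta>' @ \<gamma>" "H.bisim \<alpha>' \<beta>'"
        using \<open>(x, y) \<in> B\<close> unfolding B_def by auto
      then show "sb_match (bpa_step V Rules) B x y a x'"
      proof cases
        case 1
        show ?thesis using G.bisim_step_mono[OF 1 step G_sub] .
      next
        case (2 \<alpha>' \<beta>')
        show ?thesis
        proof (cases "\<alpha>' \<in> lists (R_of V Rules \<gamma>)")
          case True
          then obtain \<delta> where "\<delta> \<in> lists (R_of V Rules \<gamma>)" "tau_star (bpa_step V Rules) \<beta>' \<delta>"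
            using bisim_R_deadlocked_tau_star[OF H.bisim_sym[OF 2(3)]] by blast
          then have "tau_star (bpa_step V Rules) y (\<delta> @ \<gamma>)" "G.bisim x (\<delta> @ \<gamma>)"
            using tau_star_append \<gamma>_in_lists 2(1,2) True bisim_append_if_in_lists_R_of
              G.bisim_sym G.bisim_trans by metis+
          then show ?thesis
            using sb_match_tau_star_prepend[OF _ G.bisim_step_mono[OF _ step G_sub]] by blast
        next
          case False
          then obtain \<alpha>'' where "bpa_step V Rules \<alpha>' a \<alpha>''" "x' = \<alpha>'' @ \<gamma>"
            using step_append_nonempty step 2(1) by (metis lists.Nil)
          moreover from False \<open>bpa_step V Rules \<alpha>' a \<alpha>''\<close>
          have step_R: "bpa_step_R V Rules (R_of V Rules \<gamma>) \<alpha>' a \<alpha>''" unfolding bpa_step_R_def by simp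
          ultimately have "sb_match (bpa_step V Rules) ((\<lambda>(x, y). (x @ \<gamma>, y @ \<gamma>)) ` {(x, y). H.bisim x y})
              x y a x'"
            using sb_match_map[of "bpa_step_R V Rules (R_of V Rules \<gamma>)" "bpa_step V Rules" "\<lambda>x. x @ \<gamma>",
                OF step_R_append[OF _ \<gamma>_in_lists]
                H.bisim_step[OF 2(3) step_R]] 2(1,2)
            by simp
          then show ?thesis by (rule sb_match_mono) (auto simp: B_def)
        qed
      qed
    qed
  qed
qed

lemma tau_star_append_stays_in_context:
  assumes "\<alpha> \<in> lists V" "\<alpha> \<notin> lists (R_of V Rules \<gamma>)" "G.bisim (\<alpha> @ \<gamma>) (\<beta> @ \<gamma>)"
    and "tau_star (bpa_step V Rules) (\<beta> @ \<gamma>) w" "G.bisim (\<alpha> @ \<gamma>) w"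
  obtains \<beta>' where "tau_star (bpa_step_R V Rules (R_of V Rules \<gamma>)) \<beta> \<beta>'" "w = \<beta>' @ \<gamma>"
    "\<beta>' \<notin> lists (R_of V Rules \<gamma>)"
proof -
  have no_detour: False
    if "\<delta> \<in> lists (R_of V Rules \<gamma>)" "tau_star (bpa_step V Rules) (\<beta> @ \<gamma>) (\<delta> @ \<gamma>)"
      "tau_star (bpa_step V Rules) (\<delta> @ \<gamma>) w" for \<delta>
  proof -
    have "G.bisim (\<alpha> @ \<gamma>) (\<delta> @ \<gamma>)" using G.bisim_stutter[OF assms(3) that(2,3) assms(5)] .
    then show False using in_lists_R_of_if_bisim_append assms(1,2) that(1) by blast
  qed
  from tau_star_append_cases[OF \<gamma>_in_lists assms(4)] no_detour
  obtain \<beta>' where "tau_star (bpa_step_R V Rules (R_of V Rules \<gamma>)) \<beta> \<beta>'" "w = \<beta>' @ \<gamma>"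
    by blast
  moreover have "\<beta>' \<notin> lists (R_of V Rules \<gamma>)"
    using in_lists_R_of_if_bisim_append assms(1,2,5) \<open>w = \<beta>' @ \<gamma>\<close> by blast
  ultimately show ?thesis using that by blast
qed

lemma bisim_R_if_bisim_append:
  assumes "\<alpha> \<in> lists V" "\<beta> \<in> lists V" "G.bisim (\<alpha> @ \<gamma>) (\<beta> @ \<gamma>)"
  shows "H.bisim \<alpha> \<beta>"
proof (rule H.bisimI)
  define B where "B = {(x, y). x \<in> lists V \<and> y \<in> lists V \<and> G.bisim (x @ \<gamma>) (y @ \<gamma>)}"
  show "(\<alpha>, \<beta>) \<in> B" unfolding B_def using assms by blast
  show "H.sb_bisimulation B"
  proof (rule H.sb_bisimulation_symI)
    show "B \<subseteq> lists V \<times> lists V" unfolding B_def by blast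
    show "B\<inverse> = B" unfolding B_def using G.bisim_sym by blast
    show "sb_transfer (bpa_step_R V Rules (R_of V Rules \<gamma>)) B" unfolding sb_transfer_def
    proof (intro allI impI)
      fix x y a x'
      assume "(x, y) \<in> B" and step: "bpa_step_R V Rules (R_of V Rules \<gamma>) x a x'"
      then have xy: "x \<in> lists V" "y \<in> lists V" "G.bisim (x @ \<gamma>) (y @ \<gamma>)" unfolding B_def by auto
      have x_active: "x \<notin> lists (R_of V Rules \<gamma>)" using step unfolding bpa_step_R_def by simp
      have "x' \<in> lists V" using step_R_in_lists[OF step] .
      from G.bisim_step[OF xy(3) step_R_append[OF step \<gamma>_in_lists]]
      consider w where "a = None" "tau_star (bpa_step V Rules) (y @ \<gamma>) w" "G.bisim (x @ \<gamma>) w"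
          "G.bisim (x' @ \<gamma>) w"
        | w w' where "tau_star (bpa_step V Rules) (y @ \<gamma>) w" "bpa_step V Rules w a w'"
          "G.bisim (x @ \<gamma>) w" "G.bisim (x' @ \<gamma>) w'"
        unfolding sb_match_def by auto
      then show "sb_match (bpa_step_R V Rules (R_of V Rules \<gamma>)) B x y a x'"
      proof cases
        case (1 w)
        then obtain y' where "tau_star (bpa_step_R V Rules (R_of V Rules \<gamma>)) y y'" "w = y' @ \<gamma>"
          using tau_star_append_stays_in_context[OF xy(1) x_active xy(3)] by blast
        moreover have "y' \<in> lists V" using H.tau_star_in_S calculation(1) xy(2) .
        ultimately show ?thesis
          using 1 xy \<open>x' \<in> lists V\<close> unfolding sb_match_def B_def by auto
      next
        case (2 w w')
        then obtain y' where y': "tau_star (bpa_step_R V Rules (R_of V Rules \<gamma>)) y y'" "w = y' @ \<gamma>"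
            "y' \<notin> lists (R_of V Rules \<gamma>)"
          using tau_star_append_stays_in_context[OF xy(1) x_active xy(3)] by blast
        then obtain y'' where "bpa_step V Rules y' a y''" "w' = y'' @ \<gamma>"
          using step_append_nonempty 2(2) by (metis lists.Nil)
        with y'(3) have "bpa_step_R V Rules (R_of V Rules \<gamma>) y' a y''" "y'' \<in> lists V"
          unfolding bpa_step_R_def using step_in_lists by auto
        moreover have "y' \<in> lists V" using H.tau_star_in_S y'(1) xy(2) .
        ultimately show ?thesis
          using 2 xy y' \<open>x' \<in> lists V\<close> \<open>w' = y'' @ \<gamma>\<close> unfolding sb_match_def B_def by blast
      qed
    qed
  qed
qed

end

theorem proposition4p6:
  fixes V :: "'v set" and Act :: "'a option set" and Rules :: "('v \<times> 'a option \<times> 'v list) set"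
  assumes "bpa V Act Rules" and "normed V Rules"
    and "\<alpha> \<in> lists V" and "\<beta> \<in> lists V" and "\<gamma> \<in> lists V"
  shows "bpa_bisim V Rules (\<alpha> @ \<gamma>) (\<beta> @ \<gamma>) \<longleftrightarrow> bpa_bisim_R V Rules (R_of V Rules \<gamma>) \<alpha> \<beta>"
proof -
  interpret bpa_context V Act Rules \<gamma>
    using assms by unfold_locales
  show ?thesis
    unfolding bpa_bisim_eq bpa_bisim_R_eq
    using bisim_append_if_bisim_R bisim_R_if_bisim_append assms(3,4) by blast
qed

end
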